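(* There is a constant $c>1$ such that for all $t\in[0,1]$, on $C_0\setminus\mathrm{Sing}(C_0)$, $$\tfrac1c\,\omega_{FS}|_{C_0}\le(\mathcal{F}_t^*\omega_{FS})|_{C_0}\le c\,\omega_{FS}|_{C_0}.$$ In particular $\omega_{FS}$ restricts to a symplectic form on $C_t\setminus\mathrm{Sing}(C_t)$ for every $t\in[0,1]$.
   Context: On $\mathbb{CP}^2$ with homogeneous coordinates $[z_0,z_1,z_2]$, use affine coordinates $x_k=z_k/z_0=r_ke^{i\theta_k}$ ($k=1,2$); $\omega_{FS}=i\partial\bar\partial\log(1+|x_1|^2+|x_2|^2)$ is the Fubini–Study Kähler form. $C_0$ is the line $\{z_0+z_1+z_2=0\}$ (in affine coordinates $x_1+x_2+1=0$). For $t\in[0,1]$, $\mathcal{F}_t(x_1,x_2)=\Big(\big(\tfrac{\max(1,r_2)}{\max(r_1,r_2)}\big)^tx_1,\big(\tfrac{\max(1,r_1)}{\max(r_1,r_2)}\big)^tx_2\Big)$ (extended continuously to $\mathbb{CP}^2$), $C_t=\mathcal{F}_t(C_0)$, and $\mathrm{Sing}(C_t)=\{x\in C_t:(r_1-1)(r_2-1)(r_1-r_2)=0\}$; $\mathcal{F}_t$ is smooth on $C_0\setminus\mathrm{Sing}(C_0)$. *)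

theory Defs
  imports "HOL-Analysis.Analysis"
begin

text \<open>Affine chart z0 ~= 0 of CP^2, points (x1,x2) :: complex * complex.\<close>

text \<open>Hermitian form of the Fubini--Study metric
  h_{j kbar} = d_j d_kbar log(1+|x|^2) = (delta_{jk}(1+|x|^2) - conj(x_j) x_k)/(1+|x|^2)^2,
  evaluated as sum_{j,k} h_{j kbar} u_j conj(v_k).\<close>
definition fs_herm :: "complex \<times> complex \<Rightarrow> complex \<times> complex \<Rightarrow> complex \<times> complex \<Rightarrow> complex" where
  "fs_herm x u v =
     (let s = 1 + (cmod (fst x))^2 + (cmod (snd x))^2 in
      (of_real s * (fst u * cnj (fst v) + snd u * cnj (snd v))
        - (cnj (fst x) * fst u + cnj (snd x) * snd u) * (fst x * cnj (fst v) + snd x * cnj (snd v)))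
      / of_real (s^2))"

text \<open>omega_FS = i d dbar log(1+|x1|^2+|x2|^2) as a real 2-form:
  (i dz_j \<and> dzbar_k)(u,v) summed gives omega(u,v) = -2 Im h(u,v).\<close>
definition fs_omega :: "complex \<times> complex \<Rightarrow> complex \<times> complex \<Rightarrow> complex \<times> complex \<Rightarrow> real" where
  "fs_omega x u v = -2 * Im (fs_herm x u v)"

text \<open>The line C_0 = {z0+z1+z2=0} in the affine chart.\<close>
definition C0 :: "(complex \<times> complex) set" where
  "C0 = {x. fst x + snd x + 1 = 0}"

definition Sing :: "(complex \<times> complex) set \<Rightarrow> (complex \<times> complex) set" where
  "Sing C = {x \<in> C. (cmod (fst x) - 1) * (cmod (snd x) - 1) * (cmod (fst x) - cmod (snd x)) = 0}"

definition Ft :: "real \<Rightarrow> complex \<times> complex \<Rightarrow> complex \<times> complex" where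
  "Ft t x =
     (let r1 = cmod (fst x); r2 = cmod (snd x) in
      (complex_of_real ((max 1 r2 / max r1 r2) powr t) * fst x,
       complex_of_real ((max 1 r1 / max r1 r2) powr t) * snd x))"

end

theory Submission
  imports Defs
begin

(* In logarithmic coordinates (log r_k, theta_k) the map F_t is piecewise linear: on each chamber
   cut out by the walls r1 = 1, r2 = 1, r1 = r2 it is a monomial rescaling
   x_k |-> |x1|^(t a_k) |x2|^(t b_k) x_k with integer exponents.  Writing the tangent vector (1,-1)
   of C_0 and its image under J in logarithmic coordinates, the pull-back of omega_FS by such a map
   is an explicit rational function 2 N / (1 + |F_t x|^2)^2 of the radii and the rescaling factors,
   while omega_FS itself gives 6 / (1 + |x|^2)^2.  On C_0 the radii obey |r1 - r2| <= 1 <= r1 + r2,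
   which on each chamber confines the rescaling factors and N to a compact range; by the symmetry
   exchanging the coordinates only the three chambers with r2 < r1 need to be checked, and the ratio
   always lies between 1/27 and 96. *)

lemma fs_omega_log_tangent:
  fixes z :: "complex \<times> complex" and \<mu>1 \<mu>2 \<nu>1 \<nu>2 :: complex
  defines "\<rho>1 \<equiv> (cmod (fst z))\<^sup>2" and "\<rho>2 \<equiv> (cmod (snd z))\<^sup>2"
  shows "fs_omega z (fst z * \<mu>1, snd z * \<mu>2) (fst z * \<nu>1, snd z * \<nu>2)
    = - 2 * (\<rho>1 * Im (\<mu>1 * cnj \<nu>1) + \<rho>2 * Im (\<mu>2 * cnj \<nu>2)
             + \<rho>1 * \<rho>2 * Im ((\<mu>1 - \<mu>2) * cnj (\<nu>1 - \<nu>2))) / (1 + \<rho>1 + \<rho>2)\<^sup>2"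
proof -
  have "fs_herm z (fst z * \<mu>1, snd z * \<mu>2) (fst z * \<nu>1, snd z * \<nu>2)
    = (of_real \<rho>1 * (\<mu>1 * cnj \<nu>1) + of_real \<rho>2 * (\<mu>2 * cnj \<nu>2)
       + of_real (\<rho>1 * \<rho>2) * ((\<mu>1 - \<mu>2) * cnj (\<nu>1 - \<nu>2))) / of_real ((1 + \<rho>1 + \<rho>2)\<^sup>2)"
    unfolding fs_herm_def Let_def \<rho>1_def \<rho>2_def
    unfolding of_real_power[where x = "1 + _ + _"] of_real_add of_real_1 of_real_mult complex_norm_square
    by (simp add: divide_simps) (simp add: algebra_simps power2_eq_square)
  then show ?thesis
    unfolding fs_omega_def by (simp add: Im_divide_of_real add_divide_distrib diff_divide_distrib)
qed

lemma Im_mult_cnj_log_tangent: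
  fixes \<zeta> \<xi> :: complex and t :: real
  shows "Im ((\<zeta> + of_real (t * Re \<xi>)) * cnj (\<i> * \<zeta> - of_real (t * Im \<xi>)))
    = - (inner \<zeta> \<zeta> + t * inner \<xi> \<zeta>)"
  by (simp add: inner_complex_def algebra_simps)

(* 1 / x1 and - 1 / x2 are the logarithmic coordinates of the tangent vector (1, -1) of C_0. *)
lemma C0_log_gram:
  fixes x1 x2 :: complex
  assumes "x1 + x2 + 1 = 0" "x1 \<noteq> 0" "x2 \<noteq> 0"
  defines "R1 \<equiv> (cmod x1)\<^sup>2" and "R2 \<equiv> (cmod x2)\<^sup>2"
  shows "inner (1 / x1) (1 / x1) = 1 / R1" "inner (- 1 / x2) (- 1 / x2) = 1 / R2"
    "inner (1 / x1) (- 1 / x2) = (R1 + R2 - 1) / (2 * R1 * R2)"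
proof -
  show "inner (1 / x1) (1 / x1) = 1 / R1" "inner (- 1 / x2) (- 1 / x2) = 1 / R2"
    by (simp_all add: R1_def R2_def norm_divide power_one_over flip: power2_norm_eq_inner)
  obtain X Y where x1: "x1 = Complex X Y" by (rule complex.exhaust)
  have x2: "x2 = Complex (- 1 - X) (- Y)"
    using assms(1) by (simp add: x1 complex_eq_iff)
  have R1: "R1 = X\<^sup>2 + Y\<^sup>2" and R2: "R2 = (1 + X)\<^sup>2 + Y\<^sup>2"
    unfolding R1_def R2_def x1 x2 cmod_power2 by (simp_all add: power2_eq_square algebra_simps)
  have "R1 \<noteq> 0" "R2 \<noteq> 0" using assms by (simp_all add: R1_def R2_def)
  have "Re (1 / x1) = X / R1" "Im (1 / x1) = - Y / R1"
    "Re (- 1 / x2) = (1 + X) / R2" "Im (- 1 / x2) = - Y / R2"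
    unfolding R1 R2 x1 x2
    by (simp_all add: Re_divide Im_divide power2_eq_square algebra_simps) (simp add: minus_divide_left)
  then have "inner (1 / x1) (- 1 / x2) = (X + X\<^sup>2 + Y\<^sup>2) / (R1 * R2)"
    by (simp add: inner_complex_def power2_eq_square algebra_simps add_divide_distrib)
  also have "X + X\<^sup>2 + Y\<^sup>2 = (R1 + R2 - 1) / 2"
    unfolding R1 R2 by (simp add: power2_eq_square algebra_simps)
  finally show "inner (1 / x1) (- 1 / x2) = (R1 + R2 - 1) / (2 * R1 * R2)"
    by simp
qed

definition monomial_weight :: "real \<Rightarrow> real \<Rightarrow> real \<Rightarrow> complex \<times> complex \<Rightarrow> real" where
  "monomial_weight t a b x = exp (t * (a * ln (cmod (fst x)) + b * ln (cmod (snd x))))"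

definition monomial_rescale ::
    "real \<Rightarrow> real \<Rightarrow> real \<Rightarrow> real \<Rightarrow> real \<Rightarrow> complex \<times> complex \<Rightarrow> complex \<times> complex" where
  "monomial_rescale t a1 b1 a2 b2 x =
     (of_real (monomial_weight t a1 b1 x) * fst x, of_real (monomial_weight t a2 b2 x) * snd x)"

definition monomial_rescale_deriv :: "real \<Rightarrow> real \<Rightarrow> real \<Rightarrow> real \<Rightarrow> real \<Rightarrow>
    complex \<times> complex \<Rightarrow> complex \<times> complex \<Rightarrow> complex \<times> complex" where
  "monomial_rescale_deriv t a1 b1 a2 b2 p h =
     (of_real (monomial_weight t a1 b1 p)
        * (fst h + of_real (t * (a1 * Re (fst h / fst p) + b1 * Re (snd h / snd p))) * fst p),
      of_real (monomial_weight t a2 b2 p)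
        * (snd h + of_real (t * (a2 * Re (fst h / fst p) + b2 * Re (snd h / snd p))) * snd p))"

lemma has_derivative_ln_cmod:
  fixes z :: complex
  assumes "z \<noteq> 0"
  shows "((\<lambda>w. ln (cmod w)) has_derivative (\<lambda>h. Re (h / z))) (at z)"
proof -
  have "((\<lambda>w. ln (cmod w)) has_derivative (\<lambda>h. inner h (sgn z) * inverse (cmod z))) (at z)"
    by (rule DERIV_compose_FDERIV[OF DERIV_ln has_derivative_norm]) (use assms in auto)
  moreover have "inner h (sgn z) * inverse (cmod z) = Re (h / z)" for h
  proof -
    have "(cmod z)\<^sup>2 = (Re z)\<^sup>2 + (Im z)\<^sup>2" by (simp add: cmod_power2)
    then show ?thesis
      using assms by (simp add: inner_complex_def sgn_div_norm Re_divide power2_eq_square field_simps)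
  qed
  ultimately show ?thesis by simp
qed

lemma has_derivative_monomial_weight:
  assumes "fst p \<noteq> 0" "snd p \<noteq> 0"
  shows "(monomial_weight t a b has_derivative
           (\<lambda>h. monomial_weight t a b p * (t * (a * Re (fst h / fst p) + b * Re (snd h / snd p))))) (at p)"
proof -
  have "((\<lambda>x. ln (cmod (fst x))) has_derivative (\<lambda>h. Re (fst h / fst p))) (at p)"
    "((\<lambda>x. ln (cmod (snd x))) has_derivative (\<lambda>h. Re (snd h / snd p))) (at p)"
    using has_derivative_compose[OF has_derivative_fst[OF has_derivative_ident] has_derivative_ln_cmod[OF assms(1)]]
      has_derivative_compose[OF has_derivative_snd[OF has_derivative_ident] has_derivative_ln_cmod[OF assms(2)]]
    by simp_all
  then have "((\<lambda>x. t * (a * ln (cmod (fst x)) + b * ln (cmod (snd x)))) has_derivative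
      (\<lambda>h. t * (a * Re (fst h / fst p) + b * Re (snd h / snd p)))) (at p)"
    by (intro has_derivative_mult_right has_derivative_add)
  from has_derivative_exp[OF this] show ?thesis
    unfolding monomial_weight_def by (simp add: mult.commute)
qed

lemma has_derivative_monomial_rescale:
  assumes "fst p \<noteq> 0" "snd p \<noteq> 0"
  shows "(monomial_rescale t a1 b1 a2 b2 has_derivative monomial_rescale_deriv t a1 b1 a2 b2 p) (at p)"
proof -
  have weight: "((\<lambda>x. of_real (monomial_weight t a b x) :: complex) has_derivative
      (\<lambda>h. of_real (monomial_weight t a b p * (t * (a * Re (fst h / fst p) + b * Re (snd h / snd p))))))
      (at p)" for a b
    using has_derivative_compose[OF has_derivative_monomial_weight[OF assms]
        bounded_linear.has_derivative[OF bounded_linear_of_real has_derivative_ident]]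
    by simp
  show ?thesis
    unfolding monomial_rescale_def[abs_def]
    by (rule has_derivative_Pair[OF has_derivative_mult[OF weight has_derivative_fst[OF has_derivative_ident]]
          has_derivative_mult[OF weight has_derivative_snd[OF has_derivative_ident]],
          THEN has_derivative_eq_rhs])
      (auto simp: monomial_rescale_deriv_def algebra_simps fun_eq_iff)
qed

definition pullback_num ::
    "real \<Rightarrow> real \<Rightarrow> real \<Rightarrow> real \<Rightarrow> real \<Rightarrow> real \<Rightarrow> real \<Rightarrow> real \<Rightarrow> real \<Rightarrow> real" where
  "pullback_num t a1 b1 a2 b2 L1 L2 R1 R2 =
     (let k = (R1 + R2 - 1) / 2 in
        L1 * (1 + t * (a1 + b1 * k / R2)) + L2 * (1 + t * (a2 * k / R1 + b2))
        + L1 * L2 * (1 + t * ((a1 - a2) * (R2 - k) + (b1 - b2) * (k - R1))))"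

lemma Re_i_divide: "Re (\<i> / x) = - Im (1 / x)"
  by (simp add: Re_divide Im_divide)

lemma monomial_rescale_deriv_log_form:
  assumes "fst p \<noteq> 0" "snd p \<noteq> 0" and z_def: "z = monomial_rescale t a1 b1 a2 b2 p"
    and w1_def: "w1 = 1 / fst p" and w2_def: "w2 = - 1 / snd p"
    and \<xi>1_def: "\<xi>1 = a1 *\<^sub>R w1 + b1 *\<^sub>R w2" and \<xi>2_def: "\<xi>2 = a2 *\<^sub>R w1 + b2 *\<^sub>R w2"
  shows "monomial_rescale_deriv t a1 b1 a2 b2 p (1, - 1)
      = (fst z * (w1 + of_real (t * Re \<xi>1)), snd z * (w2 + of_real (t * Re \<xi>2)))"
    "monomial_rescale_deriv t a1 b1 a2 b2 p (\<i>, - \<i>)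
      = (fst z * (\<i> * w1 - of_real (t * Im \<xi>1)), snd z * (\<i> * w2 - of_real (t * Im \<xi>2)))"
  using assms(1,2) Re_i_divide[of "fst p"] Re_i_divide[of "snd p"]
  by (simp_all add: monomial_rescale_deriv_def monomial_rescale_def z_def w1_def w2_def
      \<xi>1_def \<xi>2_def algebra_simps divide_simps)

lemma fs_omega_monomial_rescale_C0:
  fixes t a1 b1 a2 b2 :: real
  assumes "fst p + snd p + 1 = 0" "fst p \<noteq> 0" "snd p \<noteq> 0"
  defines "L1 \<equiv> (monomial_weight t a1 b1 p)\<^sup>2" and "L2 \<equiv> (monomial_weight t a2 b2 p)\<^sup>2"
    and "R1 \<equiv> (cmod (fst p))\<^sup>2" and "R2 \<equiv> (cmod (snd p))\<^sup>2"
  shows "fs_omega (monomial_rescale t a1 b1 a2 b2 p)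
           (monomial_rescale_deriv t a1 b1 a2 b2 p (1, - 1))
           (monomial_rescale_deriv t a1 b1 a2 b2 p (\<i>, - \<i>))
         = 2 * pullback_num t a1 b1 a2 b2 L1 L2 R1 R2 / (1 + L1 * R1 + L2 * R2)\<^sup>2"
proof -
  define z where "z = monomial_rescale t a1 b1 a2 b2 p"
  define w1 where "w1 = 1 / fst p"
  define w2 where "w2 = - 1 / snd p"
  define \<xi>1 where "\<xi>1 = a1 *\<^sub>R w1 + b1 *\<^sub>R w2"
  define \<xi>2 where "\<xi>2 = a2 *\<^sub>R w1 + b2 *\<^sub>R w2"
  note D = monomial_rescale_deriv_log_form[OF assms(2,3) z_def w1_def w2_def \<xi>1_def \<xi>2_def]
  have diff: "(w1 + of_real (t * Re \<xi>1)) - (w2 + of_real (t * Re \<xi>2))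
      = (w1 - w2) + of_real (t * Re (\<xi>1 - \<xi>2))"
    "(\<i> * w1 - of_real (t * Im \<xi>1)) - (\<i> * w2 - of_real (t * Im \<xi>2))
      = \<i> * (w1 - w2) - of_real (t * Im (\<xi>1 - \<xi>2))"
    by (simp_all add: algebra_simps)
  have norm_z: "(cmod (fst z))\<^sup>2 = L1 * R1" "(cmod (snd z))\<^sup>2 = L2 * R2"
    by (simp_all add: z_def monomial_rescale_def L1_def L2_def R1_def R2_def norm_mult power_mult_distrib)
  have "fs_omega z (monomial_rescale_deriv t a1 b1 a2 b2 p (1, - 1))
           (monomial_rescale_deriv t a1 b1 a2 b2 p (\<i>, - \<i>))
      = 2 * (L1 * R1 * (inner w1 w1 + t * inner \<xi>1 w1) + L2 * R2 * (inner w2 w2 + t * inner \<xi>2 w2)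
             + L1 * R1 * (L2 * R2) * (inner (w1 - w2) (w1 - w2) + t * inner (\<xi>1 - \<xi>2) (w1 - w2)))
          / (1 + L1 * R1 + L2 * R2)\<^sup>2"
    unfolding D fs_omega_log_tangent diff Im_mult_cnj_log_tangent norm_z by (simp add: algebra_simps)
  also have "\<dots> = 2 * pullback_num t a1 b1 a2 b2 L1 L2 R1 R2 / (1 + L1 * R1 + L2 * R2)\<^sup>2"
  proof -
    have "R1 \<noteq> 0" "R2 \<noteq> 0" using assms by (simp_all add: R1_def R2_def)
    moreover have "1 + L1 * R1 + L2 * R2 > 0"
      by (intro add_pos_nonneg) (simp_all add: L1_def L2_def R1_def R2_def)
    moreover have gram: "inner w1 w1 = 1 / R1" "inner w2 w2 = 1 / R2"
      "inner w1 w2 = (R1 + R2 - 1) / (2 * R1 * R2)" "inner w2 w1 = (R1 + R2 - 1) / (2 * R1 * R2)"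
      using C0_log_gram[OF assms(1-3)]
      by (simp_all add: w1_def w2_def R1_def R2_def inner_commute)
    ultimately show ?thesis
      unfolding \<xi>1_def \<xi>2_def inner_diff_left inner_diff_right inner_add_left inner_scaleR_left gram
      by (simp add: pullback_num_def field_simps)
  qed
  finally show ?thesis by (simp add: z_def)
qed

lemma fs_omega_C0_tangent:
  assumes "fst p + snd p + 1 = 0" "fst p \<noteq> 0" "snd p \<noteq> 0"
  shows "fs_omega p (1, - 1) (\<i>, - \<i>) = 6 / (1 + (cmod (fst p))\<^sup>2 + (cmod (snd p))\<^sup>2)\<^sup>2"
proof -
  have "monomial_rescale 0 0 0 0 0 p = p" "monomial_rescale_deriv 0 0 0 0 0 p h = h" for h
    by (simp_all add: monomial_rescale_def monomial_rescale_deriv_def monomial_weight_def)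
  then show ?thesis
    using fs_omega_monomial_rescale_C0[OF assms, of 0 0 0 0 0]
    by (simp add: monomial_weight_def pullback_num_def)
qed

definition Ft_weight :: "real \<Rightarrow> real \<Rightarrow> real \<Rightarrow> real" where
  "Ft_weight t r s = (max 1 s / max r s) powr t"

definition own_exponent :: "real \<Rightarrow> real \<Rightarrow> real" where
  "own_exponent r s = - of_bool (s < r)"

definition cross_exponent :: "real \<Rightarrow> real \<Rightarrow> real" where
  "cross_exponent r s = of_bool (1 < s) - of_bool (r < s)"

lemma Ft_eq_weights:
  "Ft t x = (of_real (Ft_weight t (cmod (fst x)) (cmod (snd x))) * fst x,
             of_real (Ft_weight t (cmod (snd x)) (cmod (fst x))) * snd x)"
  unfolding Ft_def Ft_weight_def Let_def by (simp only: max.commute[of "cmod (snd x)"])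

lemma Ft_weight_eq_exp:
  assumes "0 < r" "0 < s" "r \<noteq> s"
  shows "Ft_weight t r s = exp (t * (own_exponent r s * ln r + cross_exponent r s * ln s))"
proof -
  have "ln (max 1 s) = of_bool (1 < s) * ln s"
    using assms by (cases "1 < s") (simp_all add: max_def)
  moreover have "ln (max r s) = of_bool (s < r) * ln r + of_bool (r < s) * ln s"
    using assms by (cases "s < r") (simp_all add: max_def)
  moreover have "Ft_weight t r s = exp (t * (ln (max 1 s) - ln (max r s)))"
    using assms by (simp add: Ft_weight_def powr_def ln_div mult.commute max_def)
  ultimately show ?thesis
    by (simp add: own_exponent_def cross_exponent_def algebra_simps)
qed

lemma Ft_eq_monomial_rescale_near:
  fixes p :: "complex \<times> complex"
  defines "r1 \<equiv> cmod (fst p)" and "r2 \<equiv> cmod (snd p)"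
  assumes "0 < r1" "0 < r2" "r1 \<noteq> 1" "r2 \<noteq> 1" "r1 \<noteq> r2"
  obtains U where "open U" "p \<in> U"
    "\<And>x. x \<in> U \<Longrightarrow> Ft t x = monomial_rescale t (own_exponent r1 r2) (cross_exponent r1 r2)
                                                 (cross_exponent r2 r1) (own_exponent r2 r1) x"
proof
  \<comment> \<open>the points lying on the same side as p of each of the walls r1 = 1, r2 = 1, r1 = r2\<close>
  let ?U = "{x. 0 < cmod (fst x) \<and> 0 < cmod (snd x) \<and> 0 < (cmod (fst x) - 1) * (r1 - 1)
              \<and> 0 < (cmod (snd x) - 1) * (r2 - 1) \<and> 0 < (cmod (fst x) - cmod (snd x)) * (r1 - r2)}"
  show "open ?U"
    by (intro open_Collect_conj open_Collect_less continuous_intros)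
  show "p \<in> ?U"
    using assms(3-7) unfolding r1_def r2_def by (auto simp: zero_less_mult_iff)
  fix x assume "x \<in> ?U"
  then have pos: "0 < cmod (fst x)" "0 < cmod (snd x)" and ne: "cmod (fst x) \<noteq> cmod (snd x)"
    and side: "1 < cmod (fst x) \<longleftrightarrow> 1 < r1" "1 < cmod (snd x) \<longleftrightarrow> 1 < r2"
      "cmod (snd x) < cmod (fst x) \<longleftrightarrow> r2 < r1" "cmod (fst x) < cmod (snd x) \<longleftrightarrow> r1 < r2"
    by (auto simp: zero_less_mult_iff)
  have exps: "own_exponent (cmod (fst x)) (cmod (snd x)) = own_exponent r1 r2"
      "cross_exponent (cmod (fst x)) (cmod (snd x)) = cross_exponent r1 r2"
      "own_exponent (cmod (snd x)) (cmod (fst x)) = own_exponent r2 r1"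
      "cross_exponent (cmod (snd x)) (cmod (fst x)) = cross_exponent r2 r1"
    by (simp_all only: own_exponent_def cross_exponent_def side)
  show "Ft t x = monomial_rescale t (own_exponent r1 r2) (cross_exponent r1 r2)
                   (cross_exponent r2 r1) (own_exponent r2 r1) x"
    unfolding Ft_eq_weights monomial_rescale_def monomial_weight_def
    using Ft_weight_eq_exp[OF pos ne]
      Ft_weight_eq_exp[OF pos(2,1) ne[symmetric]]
    by (simp add: exps algebra_simps)
qed

(* The ratio of F_t^* omega_FS to omega_FS on the tangent line of C_0 at a point with radii r1, r2. *)
definition chamber_ratio :: "real \<Rightarrow> real \<Rightarrow> real \<Rightarrow> real" where
  "chamber_ratio t r1 r2 =
     (let L1 = (Ft_weight t r1 r2)\<^sup>2; L2 = (Ft_weight t r2 r1)\<^sup>2 in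
        pullback_num t (own_exponent r1 r2) (cross_exponent r1 r2)
          (cross_exponent r2 r1) (own_exponent r2 r1) L1 L2 (r1\<^sup>2) (r2\<^sup>2)
        * (1 + r1\<^sup>2 + r2\<^sup>2)\<^sup>2 / (3 * (1 + L1 * r1\<^sup>2 + L2 * r2\<^sup>2)\<^sup>2))"

lemma pullback_num_swap:
  "pullback_num t b2 a2 b1 a1 L2 L1 R2 R1 = pullback_num t a1 b1 a2 b2 L1 L2 R1 R2"
  by (simp add: pullback_num_def Let_def algebra_simps)

lemma chamber_ratio_swap: "chamber_ratio t r2 r1 = chamber_ratio t r1 r2"
  unfolding chamber_ratio_def Let_def
    pullback_num_swap[of t "own_exponent r1 r2" "cross_exponent r1 r2" "cross_exponent r2 r1"]
  by (simp add: ac_simps)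

lemma scaled_ratio_bounds:
  fixes N s s' :: real
  assumes "1 \<le> N" "N \<le> 32" "0 < s" "s' \<le> 3 * s" "s \<le> 3 * s'"
  shows "1 / 100 \<le> N * s\<^sup>2 / (3 * s'\<^sup>2) \<and> N * s\<^sup>2 / (3 * s'\<^sup>2) \<le> 100"
proof -
  have "0 < s'" using assms by linarith
  have "s'\<^sup>2 \<le> 9 * s\<^sup>2" "s\<^sup>2 \<le> 9 * s'\<^sup>2"
    using power_mono[OF assms(4), of 2] power_mono[OF assms(5), of 2] assms \<open>0 < s'\<close>
    by (simp_all add: power_mult_distrib)
  moreover have "s\<^sup>2 \<le> N * s\<^sup>2" "N * s\<^sup>2 \<le> 32 * s\<^sup>2"
    using assms by (simp_all add: mult_right_mono)
  ultimately show ?thesis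
    using \<open>0 < s'\<close> by (simp add: field_simps)
qed

lemma powr_unit_exponent_bounds:
  fixes q t :: real
  assumes "0 \<le> t" "t \<le> 1"
  shows "0 < q \<Longrightarrow> q \<le> 1 \<Longrightarrow> q \<le> q powr t \<and> q powr t \<le> 1"
    and "1 \<le> q \<Longrightarrow> 1 \<le> q powr t \<and> q powr t \<le> q"
  using powr_mono'[of t 1 q] powr_mono'[of 0 t q] powr_mono[of t 1 q] powr_mono[of 0 t q] assms
  by auto

lemma mult_unit_interval_bounds:
  fixes t g a b :: real
  assumes "0 \<le> t" "t \<le> 1" "a \<le> g" "g \<le> b" "a \<le> 0" "0 \<le> b"
  shows "a \<le> t * g \<and> t * g \<le> b"
proof (cases "0 \<le> g")
  case True
  then have "0 \<le> t * g" "t * g \<le> g"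
    using assms(1,2) by (simp_all add: mult_left_le_one_le)
  then show ?thesis using assms by linarith
next
  case False
  then have "t * g \<le> 0" "g \<le> t * g"
    using assms(1,2) mult_left_le_one_le[of "- g" t] by (simp_all add: mult_nonneg_nonpos)
  then show ?thesis using assms by linarith
qed

lemma chamber_ratio_bounds_outer:
  fixes t r1 r2 :: real
  assumes "0 \<le> t" "t \<le> 1" "1 < r2" "r2 < r1" "r1 \<le> 1 + r2"
  shows "1 / 100 \<le> chamber_ratio t r1 r2 \<and> chamber_ratio t r1 r2 \<le> 100"
proof -
  define L where "L = (Ft_weight t r1 r2)\<^sup>2"
  define R1 where "R1 = r1\<^sup>2"
  define R2 where "R2 = r2\<^sup>2"
  define g where "g = (R1 + R2 - 1) / (2 * R2)"
  have "r2 / r1 \<le> (r2 / r1) powr t" "(r2 / r1) powr t \<le> 1"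
    using powr_unit_exponent_bounds(1)[OF assms(1,2), of "r2 / r1"] assms by auto
  then have "(r2 / r1)\<^sup>2 \<le> L" "L \<le> 1"
    using assms by (auto simp: L_def Ft_weight_def max_def intro!: power_mono power_le_one)
  then have L: "R2 \<le> L * R1" "L \<le> 1" "0 \<le> L"
    using assms by (simp_all add: L_def R1_def R2_def power_divide field_simps)
  have R: "1 < R2" "R2 < R1" "R1 \<le> 4 * R2"
    using assms power_strict_mono[OF assms(4), of 2] power_mono[of r1 "2 * r2" 2]
    by (auto simp: R1_def R2_def one_less_power)
  have "own_exponent r1 r2 = - 1" "cross_exponent r1 r2 = 1"
    "cross_exponent r2 r1 = 0" "own_exponent r2 r1 = 0" "Ft_weight t r2 r1 = 1"
    using assms by (simp_all add: own_exponent_def cross_exponent_def Ft_weight_def max_def)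
  moreover have "pullback_num t (- 1) 1 0 0 L 1 R1 R2 = 1 + L * (2 - 2 * t + t * g)"
    using R by (simp add: pullback_num_def g_def field_simps)
  ultimately have ratio: "chamber_ratio t r1 r2
      = (1 + L * (2 - 2 * t + t * g)) * (1 + R1 + R2)\<^sup>2 / (3 * (1 + L * R1 + R2)\<^sup>2)"
    by (simp add: chamber_ratio_def Let_def L_def R1_def R2_def)
  have "0 \<le> g" "g \<le> 5 / 2"
    using R by (simp_all add: g_def field_simps)
  then have c: "0 \<le> 2 - 2 * t + t * g" "2 - 2 * t + t * g \<le> 9 / 2"
    using assms(1,2) mult_unit_interval_bounds[OF assms(1,2), of 0 g "5 / 2"] by auto
  have "L * R1 \<le> R1"
    using mult_right_mono[of L 1 R1] L R by simp
  have "1 \<le> 1 + L * (2 - 2 * t + t * g)" "1 + L * (2 - 2 * t + t * g) \<le> 32"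
    using c L mult_left_le_one_le[OF c(1) L(3,2)] by auto
  moreover have "1 + L * R1 + R2 \<le> 3 * (1 + R1 + R2)" "1 + R1 + R2 \<le> 3 * (1 + L * R1 + R2)"
    using \<open>L * R1 \<le> R1\<close> L R by argo+
  ultimately show ?thesis
    unfolding ratio using R by (intro scaled_ratio_bounds) auto
qed

lemma chamber_ratio_bounds_mixed:
  fixes t r1 r2 :: real
  assumes "0 \<le> t" "t \<le> 1" "r2 < 1" "1 < r1" "r1 \<le> 1 + r2"
  shows "1 / 100 \<le> chamber_ratio t r1 r2 \<and> chamber_ratio t r1 r2 \<le> 100"
proof -
  define L where "L = (Ft_weight t r1 r2)\<^sup>2"
  define R1 where "R1 = r1\<^sup>2"
  define R2 where "R2 = r2\<^sup>2"
  define g where "g = (3 + R2 - R1) / 2"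
  have "1 / r1 \<le> (1 / r1) powr t" "(1 / r1) powr t \<le> 1"
    using powr_unit_exponent_bounds(1)[OF assms(1,2), of "1 / r1"] assms by auto
  then have "(1 / r1)\<^sup>2 \<le> L" "L \<le> 1"
    using assms by (auto simp: L_def Ft_weight_def max_def intro!: power_mono power_le_one)
  then have L: "1 \<le> L * R1" "L \<le> 1" "0 \<le> L"
    using assms by (simp_all add: L_def R1_def power_divide field_simps)
  have R: "1 < R1" "R1 < 4" "0 < R2" "R2 < 1"
    using assms power_strict_mono[of r1 2 2] power_strict_mono[of r2 1 2]
    by (auto simp: R1_def R2_def one_less_power)
  have "own_exponent r1 r2 = - 1" "cross_exponent r1 r2 = 0"
    "cross_exponent r2 r1 = 0" "own_exponent r2 r1 = 0" "Ft_weight t r2 r1 = 1"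
    using assms by (simp_all add: own_exponent_def cross_exponent_def Ft_weight_def max_def)
  moreover have "pullback_num t (- 1) 0 0 0 L 1 R1 R2 = 1 + L * (2 - t * g)"
    by (simp add: pullback_num_def g_def field_simps)
  ultimately have ratio: "chamber_ratio t r1 r2
      = (1 + L * (2 - t * g)) * (1 + R1 + R2)\<^sup>2 / (3 * (1 + L * R1 + R2)\<^sup>2)"
    by (simp add: chamber_ratio_def Let_def L_def R1_def R2_def)
  have "- 1 / 2 \<le> g" "g \<le> 3 / 2"
    using R by (simp_all add: g_def)
  then have c: "0 \<le> 2 - t * g" "2 - t * g \<le> 5 / 2"
    using mult_unit_interval_bounds[OF assms(1,2), of "- 1 / 2" g "3 / 2"] by auto
  have "L * R1 \<le> R1"
    using mult_right_mono[of L 1 R1] L R by simp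
  have "1 \<le> 1 + L * (2 - t * g)" "1 + L * (2 - t * g) \<le> 32"
    using c L mult_left_le_one_le[OF c(1) L(3,2)] by auto
  moreover have "1 + L * R1 + R2 \<le> 3 * (1 + R1 + R2)" "1 + R1 + R2 \<le> 3 * (1 + L * R1 + R2)"
    using \<open>L * R1 \<le> R1\<close> L R by argo+
  ultimately show ?thesis
    unfolding ratio using R by (intro scaled_ratio_bounds) auto
qed

lemma chamber_ratio_bounds_inner:
  fixes t r1 r2 :: real
  assumes "0 \<le> t" "t \<le> 1" "0 < r2" "r2 < r1" "r1 < 1" "1 \<le> r1 + r2"
  shows "1 / 100 \<le> chamber_ratio t r1 r2 \<and> chamber_ratio t r1 r2 \<le> 100"
proof -
  define L where "L = (Ft_weight t r1 r2)\<^sup>2"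
  define R1 where "R1 = r1\<^sup>2"
  define R2 where "R2 = r2\<^sup>2"
  define g where "g = (3 * R1 + R2 - 1) / (2 * R1)"
  have "1 \<le> (1 / r1) powr t" "(1 / r1) powr t \<le> 1 / r1"
    using powr_unit_exponent_bounds(2)[OF assms(1,2), of "1 / r1"] assms by auto
  then have "1 \<le> L" "L \<le> (1 / r1)\<^sup>2"
    using assms by (auto simp: L_def Ft_weight_def max_def intro!: power_mono one_le_power)
  then have L: "1 \<le> L" "L * R1 \<le> 1"
    using assms by (simp_all add: L_def R1_def power_divide field_simps)
  have "1 / 2 < r1" using assms by linarith
  then have R: "1 / 4 < R1" "R1 < 1" "0 < R2" "R2 < R1"
    using assms power_strict_mono[of "1 / 2" r1 2] power_strict_mono[of r1 1 2] power_strict_mono[of r2 r1 2]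
    by (auto simp: R1_def R2_def power_divide)
  have "own_exponent r1 r2 = - 1" "cross_exponent r1 r2 = 0" "cross_exponent r2 r1 = - 1"
    "own_exponent r2 r1 = 0" "(Ft_weight t r2 r1)\<^sup>2 = L"
    using assms by (simp_all add: own_exponent_def cross_exponent_def Ft_weight_def L_def max_def)
  moreover have "pullback_num t (- 1) 0 (- 1) 0 L L R1 R2 = L * (2 + L - t * g)"
    using R by (simp add: pullback_num_def g_def field_simps)
  ultimately have ratio: "chamber_ratio t r1 r2
      = L * (2 + L - t * g) * (1 + R1 + R2)\<^sup>2 / (3 * (1 + L * R1 + L * R2)\<^sup>2)"
    by (simp add: chamber_ratio_def Let_def L_def R1_def R2_def)
  have "L * (1 / 4) \<le> L * R1"
    using L R by (intro mult_left_mono) auto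
  then have "L \<le> 4" using L by linarith
  have "- 1 \<le> g" "g \<le> 2"
    using R by (simp_all add: g_def field_simps)
  then have c: "L \<le> 2 + L - t * g" "2 + L - t * g \<le> 7"
    using mult_unit_interval_bounds[OF assms(1,2), of "- 1" g 2] \<open>L \<le> 4\<close> by auto
  have "L * R2 \<le> L * R1" "0 \<le> L * R2"
    using L R by (simp_all add: mult_left_mono)
  have "1 * 1 \<le> L * (2 + L - t * g)" "L * (2 + L - t * g) \<le> 4 * 7"
    using c L \<open>L \<le> 4\<close> by (intro mult_mono; simp)+
  moreover have "1 + L * R1 + L * R2 \<le> 3 * (1 + R1 + R2)" "1 + R1 + R2 \<le> 3 * (1 + L * R1 + L * R2)"
    using \<open>L * R2 \<le> L * R1\<close> \<open>0 \<le> L * R2\<close> L R by argo+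
  ultimately show ?thesis
    unfolding ratio using R by (intro scaled_ratio_bounds) auto
qed

lemma chamber_ratio_bounds:
  fixes t r1 r2 :: real
  assumes "0 \<le> t" "t \<le> 1" "0 < r1" "0 < r2" "r1 \<noteq> 1" "r2 \<noteq> 1" "r1 \<noteq> r2"
    "r1 \<le> 1 + r2" "r2 \<le> 1 + r1" "1 \<le> r1 + r2"
  shows "1 / 100 \<le> chamber_ratio t r1 r2 \<and> chamber_ratio t r1 r2 \<le> 100"
proof -
  have ordered: "1 / 100 \<le> chamber_ratio t a b \<and> chamber_ratio t a b \<le> 100"
    if hyps: "0 < b" "b < a" "a \<noteq> 1" "b \<noteq> 1" "a \<le> 1 + b" "1 \<le> a + b" for a b
  proof -
    consider "1 < b" | "b < 1" "1 < a" | "a < 1"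
      using hyps by (cases "1 < b"; cases "1 < a") auto
    then show ?thesis
      using chamber_ratio_bounds_outer[OF assms(1,2)] chamber_ratio_bounds_mixed[OF assms(1,2)]
        chamber_ratio_bounds_inner[OF assms(1,2)] hyps
      by cases auto
  qed
  show ?thesis
  proof (cases "r2 < r1")
    case True
    then show ?thesis using ordered assms by blast
  next
    case False
    then have "r1 < r2" using assms(7) by linarith
    then show ?thesis
      using ordered[of r1 r2] assms chamber_ratio_swap[of t r2 r1] by (simp add: add.commute)
  qed
qed

lemma C0_minus_Sing_radii:
  assumes "p \<in> C0 - Sing C0"
  defines "r1 \<equiv> cmod (fst p)" and "r2 \<equiv> cmod (snd p)"
  shows "fst p + snd p + 1 = 0" "0 < r1" "0 < r2" "r1 \<noteq> 1" "r2 \<noteq> 1" "r1 \<noteq> r2"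
    "r1 \<le> 1 + r2" "r2 \<le> 1 + r1" "1 \<le> r1 + r2"
proof -
  show line: "fst p + snd p + 1 = 0" using assms(1) by (simp add: C0_def)
  show "r1 \<noteq> 1" "r2 \<noteq> 1" "r1 \<noteq> r2" using assms(1) by (auto simp: C0_def Sing_def r1_def r2_def)
  have "fst p = - (1 + snd p)" "snd p = - (1 + fst p)" "1 = - (fst p + snd p)"
    using line by (simp_all add: algebra_simps eq_neg_iff_add_eq_0)
  then show "r1 \<le> 1 + r2" "r2 \<le> 1 + r1" "1 \<le> r1 + r2"
    unfolding r1_def r2_def by (metis norm_minus_cancel norm_one norm_triangle_ineq)+
  then show "0 < r1" "0 < r2"
    using \<open>r1 \<noteq> 1\<close> \<open>r2 \<noteq> 1\<close> by (auto simp: r1_def r2_def)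
qed

lemma fs_omega_Ft_C0:
  assumes "p \<in> C0 - Sing C0"
  shows "\<exists>D. (Ft t has_derivative D) (at p) \<and>
           fs_omega (Ft t p) (D (1, - 1)) (D (\<i>, - \<i>))
             = chamber_ratio t (cmod (fst p)) (cmod (snd p)) * fs_omega p (1, - 1) (\<i>, - \<i>)"
proof -
  define r1 where "r1 = cmod (fst p)"
  define r2 where "r2 = cmod (snd p)"
  note radii = C0_minus_Sing_radii[OF assms, folded r1_def r2_def]
  have nz: "fst p \<noteq> 0" "snd p \<noteq> 0"
    using radii by (auto simp: r1_def r2_def)
  define G where "G = monomial_rescale t (own_exponent r1 r2) (cross_exponent r1 r2)
                        (cross_exponent r2 r1) (own_exponent r2 r1)"
  define D where "D = monomial_rescale_deriv t (own_exponent r1 r2) (cross_exponent r1 r2)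
                        (cross_exponent r2 r1) (own_exponent r2 r1) p"
  obtain U where U: "open U" "p \<in> U" "\<And>x. x \<in> U \<Longrightarrow> Ft t x = G x"
    using Ft_eq_monomial_rescale_near[OF radii(2-6)[unfolded r1_def r2_def]]
    unfolding G_def r1_def r2_def by metis
  have deriv: "(Ft t has_derivative D) (at p)"
    unfolding D_def
    by (rule has_derivative_transform_within_open[OF has_derivative_monomial_rescale[OF nz] U(1,2)])
      (simp add: U(3) G_def)
  have "Ft_weight t r1 r2 = monomial_weight t (own_exponent r1 r2) (cross_exponent r1 r2) p"
    "Ft_weight t r2 r1 = monomial_weight t (cross_exponent r2 r1) (own_exponent r2 r1) p"
    using Ft_weight_eq_exp[of r1 r2 t] Ft_weight_eq_exp[of r2 r1 t] radii
    by (simp_all add: monomial_weight_def r1_def r2_def algebra_simps)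
  moreover have "0 < 1 + r1\<^sup>2 + r2\<^sup>2"
    by (simp add: add_pos_nonneg)
  ultimately have "fs_omega (Ft t p) (D (1, - 1)) (D (\<i>, - \<i>))
      = chamber_ratio t r1 r2 * fs_omega p (1, - 1) (\<i>, - \<i>)"
    using fs_omega_monomial_rescale_C0[OF radii(1) nz] fs_omega_C0_tangent[OF radii(1) nz] U
    by (simp add: G_def D_def chamber_ratio_def Let_def r1_def r2_def)
  with deriv show ?thesis
    unfolding r1_def r2_def by blast
qed

theorem lemma4p1:
  shows "\<exists>c::real. c > 1 \<and>
    (\<forall>t\<in>{0..1::real}. \<forall>p\<in>C0 - Sing C0.
       \<exists>D. (Ft t has_derivative D) (at p) \<and>
           (1 / c) * fs_omega p (1, -1) (\<i>, -\<i>)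
             \<le> fs_omega (Ft t p) (D (1, -1)) (D (\<i>, -\<i>)) \<and>
           fs_omega (Ft t p) (D (1, -1)) (D (\<i>, -\<i>))
             \<le> c * fs_omega p (1, -1) (\<i>, -\<i>))"
proof (intro exI[of _ 100] conjI ballI)
  fix t p assume "t \<in> {0..1::real}" and p: "p \<in> C0 - Sing C0"
  then have "1 / 100 \<le> chamber_ratio t (cmod (fst p)) (cmod (snd p))"
    "chamber_ratio t (cmod (fst p)) (cmod (snd p)) \<le> 100"
    using chamber_ratio_bounds C0_minus_Sing_radii[OF p] by auto
  moreover have "0 < 1 + (cmod (fst p))\<^sup>2 + (cmod (snd p))\<^sup>2"
    by (simp add: add_pos_nonneg)
  then have "0 < fs_omega p (1, - 1) (\<i>, - \<i>)"
    using C0_minus_Sing_radii[OF p] by (simp add: fs_omega_C0_tangent)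
  moreover obtain D where "(Ft t has_derivative D) (at p)"
    "fs_omega (Ft t p) (D (1, - 1)) (D (\<i>, - \<i>))
       = chamber_ratio t (cmod (fst p)) (cmod (snd p)) * fs_omega p (1, - 1) (\<i>, - \<i>)"
    using fs_omega_Ft_C0[OF p] by blast
  ultimately show "\<exists>D. (Ft t has_derivative D) (at p) \<and>
           (1 / 100) * fs_omega p (1, -1) (\<i>, -\<i>)
             \<le> fs_omega (Ft t p) (D (1, -1)) (D (\<i>, -\<i>)) \<and>
           fs_omega (Ft t p) (D (1, -1)) (D (\<i>, -\<i>))
             \<le> 100 * fs_omega p (1, -1) (\<i>, -\<i>)"
    by (intro exI[of _ D]) (simp add: mult_right_mono)
qed simp

end
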